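(* Let $p$ be an odd prime and let $m,r$ be positive integers with $p\nmid m$ and $r<m$. Then for every integer $s$ with $0\le s\le\langle -\frac{m-r}{m}\rangle_p$, $$\sum_{k=0}^{p-s-1}\frac{(q^r;q^m)_k\,(q^{m-r};q^m)_{k+s}}{(q^m;q^m)_k\,(q^m;q^m)_{k+s}}\equiv(-1)^{\langle -\frac{r}{m}\rangle_p}\,q^{-\frac{m\langle -\frac{r}{m}\rangle_p(\langle -\frac{r}{m}\rangle_p+1)}{2}}\pmod{[p]}.$$ In particular, if moreover $p\equiv\pm1\pmod m$, then $$\sum_{k=0}^{p-s-1}\frac{(q^r;q^m)_k\,(q^{m-r};q^m)_{k+s}}{(q^m;q^m)_k\,(q^m;q^m)_{k+s}}\equiv(-1)^{\langle -\frac{r}{m}\rangle_p}\,q^{\frac{r(m-r)(1-p^2)}{2m}}\pmod{[p]}.$$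
   Context: For an indeterminate $q$ and an integer $n\ge 0$: $(a;q)_0=1$ and $(a;q)_n=(1-a)(1-aq)\cdots(1-aq^{n-1})$. For a positive integer $p$, $[p]=\frac{1-q^p}{1-q}=1+q+\cdots+q^{p-1}$. For a prime $p$, $[p]$ is irreducible in $\mathbb{Q}[q]$; for rational functions $A,B$ of $q$ whose denominators are coprime to $[p]$, $A\equiv B\pmod{[p]^r}$ means that $A-B$, written in lowest terms, has numerator divisible by $[p]^r$ in $\mathbb{Q}[q]$. For a prime $p$ and a $p$-adic integer $x$ (e.g. a rational number whose denominator is not divisible by $p$), $\langle x\rangle_p$ denotes the least nonnegative residue of $x$ modulo $p$, i.e. the unique integer in $\{0,1,\dots,p-1\}$ congruent to $x$ modulo $p$. *)

theory Defs
  imports "HOL-Computational_Algebra.Computational_Algebra"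
          "HOL-Computational_Algebra.Normalized_Fraction" "HOL-Computational_Algebra.Field_as_Ring"
begin

type_synonym ratfun = "rat poly fract"

definition qvar :: ratfun where
  "qvar = to_fract [:0, 1:]"

definition qpoch :: "'a::comm_ring_1 \<Rightarrow> 'a \<Rightarrow> nat \<Rightarrow> 'a" where
  "qpoch a x n = (\<Prod>i<n. 1 - a * x ^ i)"

definition qint :: "nat \<Rightarrow> rat poly" where
  "qint n = (\<Sum>i<n. monom 1 i)"

definition num_rf :: "ratfun \<Rightarrow> rat poly" where
  "num_rf A = fst (quot_of_fract A)"
definition den_rf :: "ratfun \<Rightarrow> rat poly" where
  "den_rf A = snd (quot_of_fract A)"

definition qcong :: "ratfun \<Rightarrow> ratfun \<Rightarrow> rat poly \<Rightarrow> nat \<Rightarrow> bool" where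
  "qcong A B P e \<longleftrightarrow> coprime (den_rf A) P \<and> coprime (den_rf B) P \<and>
                      P ^ e dvd num_rf (A - B)"

definition lnr :: "nat \<Rightarrow> rat \<Rightarrow> nat" where
  "lnr p x = (THE a. a < p \<and>
      int p dvd (int a * snd (quotient_of x) - fst (quotient_of x)))"

end

theory Submission
  imports Defs
begin

(* Since [p] is the product of the factors (q - z) over the complex p-th roots of
   unity z \<noteq> 1, and these are simple roots, a congruence modulo [p] between rational functions
   amounts to equality of their values at every such z.
   At a nontrivial p-th root of unity z, with a = <-r/m>_p, one has z^r (z^m)^a = 1 and
   z^(m-r) = (z^m)^(a+1), so (3) with Q = z^m, u = z^r evaluates the sum; the theorem follows. *)

section \<open>Evaluating rational polynomials at complex numbers\<close>

definition peval :: "complex \<Rightarrow> rat poly \<Rightarrow> complex" where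
  "peval z f = poly (map_poly of_rat f) z"

lemma map_poly_of_rat_add:
  "map_poly (of_rat :: rat \<Rightarrow> complex) (f + g) = map_poly of_rat f + map_poly of_rat g"
  by (rule poly_eqI) (simp add: coeff_map_poly of_rat_add)

lemma map_poly_of_rat_mult:
  "map_poly (of_rat :: rat \<Rightarrow> complex) (f * g) = map_poly of_rat f * map_poly of_rat g"
  by (rule poly_eqI) (simp add: coeff_map_poly coeff_mult of_rat_sum of_rat_mult)

lemma map_poly_of_rat_minus:
  "map_poly (of_rat :: rat \<Rightarrow> complex) (- f) = - map_poly of_rat f"
  by (rule poly_eqI) (simp add: coeff_map_poly of_rat_minus)

lemma peval_add [simp]: "peval z (f + g) = peval z f + peval z g"
  by (simp add: peval_def map_poly_of_rat_add)

lemma peval_mult [simp]: "peval z (f * g) = peval z f * peval z g"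
  by (simp add: peval_def map_poly_of_rat_mult)

lemma peval_minus [simp]: "peval z (- f) = - peval z f"
  by (simp add: peval_def map_poly_of_rat_minus)

lemma peval_1 [simp]: "peval z 1 = 1"
  by (simp add: peval_def)

lemma peval_0 [simp]: "peval z 0 = 0"
  by (simp add: peval_def)

lemma peval_monom_1 [simp]: "peval z (monom 1 i) = z ^ i"
  by (simp add: peval_def map_poly_monom poly_monom)

lemma peval_sum: "peval z (sum f A) = (\<Sum>i\<in>A. peval z (f i))"
  by (induction A rule: infinite_finite_induct) auto

section \<open>The q-integer [p] and the roots of unity\<close>

lemma peval_qint: "peval z (qint p) = (\<Sum>i<p. z ^ i)"
  by (simp add: qint_def peval_sum)

lemma peval_qint_eq_0_iff:
  assumes "p > 0"
  shows "peval z (qint p) = 0 \<longleftrightarrow> z ^ p = 1 \<and> z \<noteq> 1"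
proof (cases "z = 1")
  case True
  then show ?thesis using assms by (simp add: peval_qint)
next
  case False
  have "(z - 1) * (\<Sum>i<p. z ^ i) = z ^ p - 1"
    by (induction p) (auto simp: algebra_simps)
  then show ?thesis using False by (auto simp: peval_qint)
qed

lemma degree_qint: "p > 0 \<Longrightarrow> degree (qint p) = p - 1"
proof (induction p)
  case (Suc n)
  show ?case
  proof (cases "n = 0")
    case False
    have "qint (Suc n) = qint n + monom 1 n" by (simp add: qint_def)
    moreover have "degree (qint n) < degree (monom (1::rat) n)"
      using Suc False by (simp add: degree_monom_eq)
    ultimately show ?thesis using False by (simp add: degree_add_eq_right degree_monom_eq)
  qed (simp add: qint_def)
qed simp

lemma qint_nonzero: "p > 0 \<Longrightarrow> qint p \<noteq> 0"
  using peval_qint[of 1 p] by auto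

text \<open>A rational polynomial vanishing at all p-1 zeros of [p] is divisible by [p]:
  otherwise its remainder modulo [p] would be a nonzero polynomial of degree
  below p-1 with p-1 distinct roots.\<close>
lemma qint_dvd_if_vanishing:
  assumes "p > 0" and vanish: "\<And>z. z ^ p = 1 \<Longrightarrow> z \<noteq> 1 \<Longrightarrow> peval z f = 0"
  shows "qint p dvd f"
proof (rule ccontr)
  define r where "r = f mod qint p"
  define r' where "r' = map_poly (of_rat :: rat \<Rightarrow> complex) r"
  assume "\<not> qint p dvd f"
  then have "r \<noteq> 0" by (simp add: r_def mod_eq_0_iff_dvd)
  then have r'0: "r' \<noteq> 0" by (simp add: r'_def map_poly_eq_0_iff)
  have "peval z r = 0" if "z ^ p = 1" "z \<noteq> 1" for z
  proof -
    have "f = qint p * (f div qint p) + r" by (simp add: r_def)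
    then have "peval z f = peval z (qint p) * peval z (f div qint p) + peval z r"
      by (metis peval_add peval_mult)
    moreover have "peval z (qint p) = 0" using peval_qint_eq_0_iff[OF assms(1)] that by simp
    ultimately show ?thesis using vanish[OF that] by simp
  qed
  then have "{z. z ^ p = 1} - {1} \<subseteq> {z. poly r' z = 0}"
    by (auto simp: peval_def r'_def)
  then have "card ({z::complex. z ^ p = 1} - {1}) \<le> card {z. poly r' z = 0}"
    by (intro card_mono poly_roots_finite r'0)
  also have "\<dots> \<le> degree r'" by (rule card_poly_roots_bound[OF r'0])
  also have "\<dots> = degree r" unfolding r'_def by (rule degree_map_poly) simp
  also have "\<dots> < p - 1"
    using degree_mod_less[of "qint p" f] \<open>r \<noteq> 0\<close> qint_nonzero[OF assms(1)] degree_qint[OF assms(1)]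
    by (simp add: r_def)
  finally have "card ({z::complex. z ^ p = 1} - {1}) < p - 1" .
  moreover have "card ({z::complex. z ^ p = 1} - {1}) = p - 1"
    using card_roots_unity_eq[OF assms(1)] finite_roots_unity[of p] assms(1)
    by (subst card_Diff_singleton) auto
  ultimately show False by simp
qed

text \<open>A rational polynomial vanishing at none of the zeros of [p] is coprime to [p]:
  a common factor of positive degree would have a complex root, which is a zero of both.\<close>
lemma coprime_qint_if_nonvanishing:
  assumes "p > 0" and nonvanish: "\<And>z. z ^ p = 1 \<Longrightarrow> z \<noteq> 1 \<Longrightarrow> peval z g \<noteq> 0"
  shows "coprime g (qint p)"
proof (rule coprimeI)
  fix c assume cg: "c dvd g" and cq: "c dvd qint p"
  have c0: "c \<noteq> 0" using cq qint_nonzero[OF assms(1)] by auto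
  show "is_unit c"
  proof (cases "degree c = 0")
    case True
    then show ?thesis using c0 by (simp add: is_unit_iff_degree)
  next
    case False
    have "degree (map_poly (of_rat :: rat \<Rightarrow> complex) c) = degree c"
      by (rule degree_map_poly) simp
    with False have "\<not> constant (poly (map_poly (of_rat :: rat \<Rightarrow> complex) c))"
      by (simp add: constant_degree)
    then obtain z where "poly (map_poly (of_rat :: rat \<Rightarrow> complex) c) z = 0"
      using fundamental_theorem_of_algebra by blast
    then have cz: "peval z c = 0" by (simp add: peval_def)
    have "peval z (qint p) = 0" using cq cz by (auto elim: dvdE)
    then have "z ^ p = 1" "z \<noteq> 1" using peval_qint_eq_0_iff[OF assms(1)] by auto
    moreover have "peval z g = 0" using cg cz by (auto elim: dvdE)
    ultimately show ?thesis using nonvanish by blast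
  qed
qed

section \<open>Values of rational functions at complex points\<close>

definition rf_value :: "complex \<Rightarrow> ratfun \<Rightarrow> complex \<Rightarrow> bool" where
  "rf_value z A c \<longleftrightarrow>
     (\<exists>n d. A = to_fract n / to_fract d \<and> peval z d \<noteq> 0 \<and> c = peval z n / peval z d)"

lemma rf_value_poly: "rf_value z (to_fract n) (peval z n)"
  unfolding rf_value_def by (intro exI[of _ n] exI[of _ 1]) simp

lemma rf_value_1: "rf_value z 1 1"
  using rf_value_poly[of z 1] by simp

lemma rf_value_0: "rf_value z 0 0"
  using rf_value_poly[of z 0] by simp

lemma rf_value_qvar: "rf_value z qvar z"
  using rf_value_poly[of z "[:0, 1:]"] by (simp add: qvar_def peval_def map_poly_pCons)

lemma rf_value_add:
  assumes "rf_value z A a" "rf_value z B b"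
  shows "rf_value z (A + B) (a + b)"
proof -
  from assms obtain n1 d1 n2 d2 where
    h: "A = to_fract n1 / to_fract d1" "peval z d1 \<noteq> 0" "a = peval z n1 / peval z d1"
       "B = to_fract n2 / to_fract d2" "peval z d2 \<noteq> 0" "b = peval z n2 / peval z d2"
    unfolding rf_value_def by blast
  have "d1 \<noteq> 0" "d2 \<noteq> 0" using h by auto
  then have "A + B = to_fract (n1 * d2 + n2 * d1) / to_fract (d1 * d2)"
    using h by (simp add: add_frac_eq)
  moreover have "a + b = peval z (n1 * d2 + n2 * d1) / peval z (d1 * d2)"
    using h by (simp add: add_frac_eq)
  ultimately show ?thesis
    unfolding rf_value_def using h by (intro exI[of _ "n1 * d2 + n2 * d1"] exI[of _ "d1 * d2"]) simp
qed

lemma rf_value_mult: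
  assumes "rf_value z A a" "rf_value z B b"
  shows "rf_value z (A * B) (a * b)"
proof -
  from assms obtain n1 d1 n2 d2 where
    h: "A = to_fract n1 / to_fract d1" "peval z d1 \<noteq> 0" "a = peval z n1 / peval z d1"
       "B = to_fract n2 / to_fract d2" "peval z d2 \<noteq> 0" "b = peval z n2 / peval z d2"
    unfolding rf_value_def by blast
  then show ?thesis
    unfolding rf_value_def by (intro exI[of _ "n1 * n2"] exI[of _ "d1 * d2"]) simp
qed

lemma rf_value_minus:
  assumes "rf_value z A a"
  shows "rf_value z (- A) (- a)"
proof -
  from assms obtain n d where
    h: "A = to_fract n / to_fract d" "peval z d \<noteq> 0" "a = peval z n / peval z d"
    unfolding rf_value_def by blast
  then show ?thesis
    unfolding rf_value_def by (intro exI[of _ "- n"] exI[of _ d]) simp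
qed

lemma rf_value_diff:
  "rf_value z A a \<Longrightarrow> rf_value z B b \<Longrightarrow> rf_value z (A - B) (a - b)"
  using rf_value_add[OF _ rf_value_minus, of z A a B b] by simp

lemma rf_value_inverse:
  assumes "rf_value z A a" "a \<noteq> 0"
  shows "rf_value z (inverse A) (inverse a)"
proof -
  from assms(1) obtain n d where
    h: "A = to_fract n / to_fract d" "peval z d \<noteq> 0" "a = peval z n / peval z d"
    unfolding rf_value_def by blast
  then have "peval z n \<noteq> 0" using assms(2) by auto
  with h show ?thesis
    unfolding rf_value_def by (intro exI[of _ d] exI[of _ n]) simp
qed

lemma rf_value_divide:
  "rf_value z A a \<Longrightarrow> rf_value z B b \<Longrightarrow> b \<noteq> 0 \<Longrightarrow> rf_value z (A / B) (a / b)"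
  using rf_value_mult[OF _ rf_value_inverse] by (simp add: divide_inverse)

lemma rf_value_sum:
  "(\<And>i. i \<in> I \<Longrightarrow> rf_value z (f i) (g i)) \<Longrightarrow> rf_value z (sum f I) (sum g I)"
  by (induction I rule: infinite_finite_induct) (auto intro: rf_value_add rf_value_0)

lemma rf_value_prod:
  "(\<And>i. i \<in> I \<Longrightarrow> rf_value z (f i) (g i)) \<Longrightarrow> rf_value z (prod f I) (prod g I)"
  by (induction I rule: infinite_finite_induct) (auto intro: rf_value_mult rf_value_1)

lemma rf_value_power: "rf_value z A a \<Longrightarrow> rf_value z (A ^ n) (a ^ n)"
  by (induction n) (auto intro: rf_value_mult rf_value_1)

lemma rf_value_power_int:
  "rf_value z A a \<Longrightarrow> a \<noteq> 0 \<Longrightarrow> rf_value z (A powi k) (a powi k)"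
  by (cases "k \<ge> 0") (auto simp: power_int_def intro!: rf_value_power rf_value_inverse)

lemma rf_value_qpoch:
  "rf_value z A a \<Longrightarrow> rf_value z X x \<Longrightarrow> rf_value z (qpoch A X n) (qpoch a x n)"
  unfolding qpoch_def
  by (intro rf_value_prod rf_value_diff rf_value_1 rf_value_mult rf_value_power)

lemma fract_lowest_terms:
  assumes A: "A = to_fract n / to_fract d" and "d \<noteq> 0"
  shows "num_rf A * d = n * den_rf A" and "den_rf A dvd d"
proof -
  have D0: "den_rf A \<noteq> 0" by (simp add: den_rf_def)
  have "A = to_fract (num_rf A) / to_fract (den_rf A)"
    using Fract_quot_of_fract[of A] by (simp add: num_rf_def den_rf_def Fract_conv_to_fract)
  then have reduced: "A * to_fract (den_rf A) = to_fract (num_rf A)"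
    using D0 by (subst (asm) eq_divide_eq) simp
  have given: "A * to_fract d = to_fract n" using A \<open>d \<noteq> 0\<close> by simp
  have "to_fract (num_rf A * d) = A * to_fract (den_rf A) * to_fract d" by (simp add: reduced)
  also have "\<dots> = A * to_fract d * to_fract (den_rf A)" by (simp add: ac_simps)
  also have "\<dots> = to_fract (n * den_rf A)" by (simp add: given)
  finally have "to_fract (num_rf A * d) = to_fract (n * den_rf A)" .
  then show cross: "num_rf A * d = n * den_rf A" by (simp only: to_fract_eq_iff)
  have "coprime (den_rf A) (num_rf A)"
    using coprime_quot_of_fract[of A] by (simp add: num_rf_def den_rf_def coprime_commute)
  then show "den_rf A dvd d"
    using cross by (metis coprime_dvd_mult_right_iff dvd_triv_right)
qed

lemma rf_value_den_nonzero:
  assumes "rf_value z A a"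
  shows "peval z (den_rf A) \<noteq> 0"
proof -
  from assms obtain n d where A: "A = to_fract n / to_fract d" and d: "peval z d \<noteq> 0"
    unfolding rf_value_def by blast
  then have "den_rf A dvd d" by (intro fract_lowest_terms(2)) auto
  then obtain k where "d = den_rf A * k" by (auto elim: dvdE)
  with d show ?thesis by auto
qed

lemma rf_value_num_zero:
  assumes "rf_value z A 0"
  shows "peval z (num_rf A) = 0"
proof -
  from assms obtain n d where
    A: "A = to_fract n / to_fract d" and d: "peval z d \<noteq> 0" and n: "peval z n = 0"
    unfolding rf_value_def by auto
  then have "num_rf A * d = n * den_rf A" by (intro fract_lowest_terms(1)) auto
  then have "peval z (num_rf A) * peval z d = 0" using n by (metis peval_mult mult_zero_left)
  with d show ?thesis by simp
qed

lemma qcong_if_equal_values: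
  assumes "p > 0"
    and at_roots: "\<And>z. z ^ p = 1 \<Longrightarrow> z \<noteq> 1 \<Longrightarrow> \<exists>c. rf_value z A c \<and> rf_value z B c"
  shows "qcong A B (qint p) 1"
  unfolding qcong_def power_one_right
proof (intro conjI)
  have "peval z (den_rf A) \<noteq> 0 \<and> peval z (den_rf B) \<noteq> 0" if "z ^ p = 1" "z \<noteq> 1" for z
    using at_roots[OF that] rf_value_den_nonzero by blast
  then show "coprime (den_rf A) (qint p)" "coprime (den_rf B) (qint p)"
    by (auto intro!: coprime_qint_if_nonvanishing[OF assms(1)])
  show "qint p dvd num_rf (A - B)"
  proof (rule qint_dvd_if_vanishing[OF assms(1)])
    fix z :: complex assume "z ^ p = 1" "z \<noteq> 1"
    then obtain c where "rf_value z A c" "rf_value z B c" using at_roots by blast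
    then have "rf_value z (A - B) 0" using rf_value_diff by fastforce
    then show "peval z (num_rf (A - B)) = 0" by (rule rf_value_num_zero)
  qed
qed

lemma qcong_signed_power_of_q:
  assumes "p > 0"
    and at_roots: "\<And>z. z ^ p = 1 \<Longrightarrow> z \<noteq> 1 \<Longrightarrow> rf_value z A ((-1) ^ a * z powi e)"
  shows "qcong A ((-1) ^ a * qvar powi e) (qint p) 1"
proof (rule qcong_if_equal_values[OF assms(1)])
  fix z :: complex assume z: "z ^ p = 1" "z \<noteq> 1"
  then have "z \<noteq> 0" using assms(1) by (auto simp: power_0_left)
  then have "rf_value z ((-1) ^ a * qvar powi e) ((-1) ^ a * z powi e)"
    by (intro rf_value_mult rf_value_power rf_value_minus rf_value_1 rf_value_power_int rf_value_qvar)
  then show "\<exists>c. rf_value z A c \<and> rf_value z ((-1) ^ a * qvar powi e) c"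
    using at_roots[OF z] by blast
qed

section \<open>Identities for q-shifted factorials over a field\<close>

text \<open>Throughout, the base Q is only assumed to satisfy Q^i \<noteq> 1 for 1 \<le> i \<le> N, so that the
  identities apply both to the indeterminate and to powers of a root of unity.\<close>

lemma qpoch_0 [simp]: "qpoch x Q 0 = 1"
  by (simp add: qpoch_def)

lemma qpoch_Suc: "qpoch x Q (Suc n) = qpoch x Q n * (1 - x * Q ^ n)"
  by (simp add: qpoch_def)

lemma qpoch_add: "qpoch x Q (m + n) = qpoch x Q m * qpoch (x * Q ^ m) Q n"
  by (induction n) (simp_all add: qpoch_Suc power_add algebra_simps)

lemma qpoch_nonzero:
  fixes Q :: "'a::field"
  assumes nz: "\<And>i. 1 \<le> i \<Longrightarrow> i \<le> N \<Longrightarrow> Q ^ i \<noteq> 1" and "k \<le> N"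
  shows "qpoch Q Q k \<noteq> 0"
  using assms(2)
proof (induction k)
  case (Suc k)
  have "Q * Q ^ k \<noteq> 1" using nz[of "Suc k"] Suc.prems by simp
  then show ?case using Suc by (simp add: qpoch_Suc)
qed simp

lemma qpoch_reversed: "(\<Prod>i<a. 1 - Q ^ (a - i)) = qpoch Q Q a"
proof -
  have "(\<Prod>i<a. 1 - Q ^ (a - i)) = (\<Prod>i<a. (\<lambda>j. 1 - Q * Q ^ j) (a - Suc i))"
    by (rule prod.cong) (simp_all, metis Suc_diff_Suc power_Suc)
  also have "\<dots> = (\<Prod>i<a. 1 - Q * Q ^ i)" by (rule prod.nat_diff_reindex)
  finally show ?thesis by (simp add: qpoch_def)
qed

text \<open>Exchanging the roles of a and n in (Q^(a+1);Q)_n / (Q;Q)_n: both equal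
  (Q;Q)_(a+n) / ((Q;Q)_a (Q;Q)_n).\<close>
lemma qpoch_ratio_swap:
  fixes Q :: "'a::field"
  assumes nz: "\<And>i. 1 \<le> i \<Longrightarrow> i \<le> N \<Longrightarrow> Q ^ i \<noteq> 1" and "a \<le> N" "n \<le> N"
  shows "qpoch (Q ^ Suc a) Q n / qpoch Q Q n = qpoch (Q ^ Suc n) Q a / qpoch Q Q a"
proof -
  have "qpoch Q Q (a + n) = qpoch Q Q a * qpoch (Q ^ Suc a) Q n" by (simp add: qpoch_add)
  moreover have "qpoch Q Q (n + a) = qpoch Q Q n * qpoch (Q ^ Suc n) Q a" by (simp add: qpoch_add)
  moreover have "qpoch Q Q a \<noteq> 0" "qpoch Q Q n \<noteq> 0" using qpoch_nonzero[OF nz] assms by auto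
  ultimately show ?thesis by (simp add: field_simps add.commute)
qed

definition tri :: "nat \<Rightarrow> nat" where
  "tri k = (\<Sum>i<k. i)"

lemma tri_0 [simp]: "tri 0 = 0"
  by (simp add: tri_def)

lemma tri_Suc [simp]: "tri (Suc k) = tri k + k"
  by (simp add: tri_def)

lemma two_tri: "2 * tri a + a = a * a"
  by (induction a) (auto simp: algebra_simps)

definition gauss_binom :: "'a::field \<Rightarrow> nat \<Rightarrow> nat \<Rightarrow> 'a" where
  "gauss_binom Q a k = (\<Prod>i<k. 1 - Q ^ (a - i)) / qpoch Q Q k"

lemma gauss_binom_0 [simp]: "gauss_binom Q a 0 = 1"
  by (simp add: gauss_binom_def)

lemma gauss_binom_eq_0: "a < k \<Longrightarrow> gauss_binom Q a k = 0"
  unfolding gauss_binom_def by (subst prod_zero[of "{..<k}"]) (auto intro!: bexI[of _ a])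

lemma gauss_binom_Suc_Suc:
  fixes Q :: "'a::field"
  assumes nz: "\<And>i. 1 \<le> i \<Longrightarrow> i \<le> N \<Longrightarrow> Q ^ i \<noteq> 1" and "k \<le> a" "a + 1 \<le> N"
  shows "gauss_binom Q (Suc a) (Suc k) = gauss_binom Q a (Suc k) + Q ^ (a - k) * gauss_binom Q a k"
proof -
  define P where "P = (\<Prod>i<k. 1 - Q ^ (a - i))"
  have P1: "(\<Prod>i<Suc k. 1 - Q ^ (Suc a - i)) = (1 - Q ^ Suc a) * P"
    unfolding P_def by (subst prod.lessThan_Suc_shift) simp
  have P2: "(\<Prod>i<Suc k. 1 - Q ^ (a - i)) = P * (1 - Q ^ (a - k))"
    unfolding P_def by simp
  have qs: "qpoch Q Q (Suc k) = qpoch Q Q k * (1 - Q ^ Suc k)" by (simp add: qpoch_Suc)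
  have n0: "qpoch Q Q k \<noteq> 0" and n1: "qpoch Q Q (Suc k) \<noteq> 0"
    using qpoch_nonzero[OF nz] assms by simp_all
  then have n2: "1 - Q ^ Suc k \<noteq> 0" using qs by auto
  have split: "1 - Q ^ Suc a = (1 - Q ^ (a - k)) + Q ^ (a - k) * (1 - Q ^ Suc k)"
  proof -
    have "Q ^ (a - k) * Q ^ Suc k = Q ^ Suc a" using assms(2) by (simp add: power_add[symmetric])
    then show ?thesis by (simp add: algebra_simps)
  qed
  have "gauss_binom Q a (Suc k) + Q ^ (a - k) * gauss_binom Q a k
      = (P * (1 - Q ^ (a - k)) + Q ^ (a - k) * P * (1 - Q ^ Suc k)) / qpoch Q Q (Suc k)"
    unfolding gauss_binom_def P2 P_def[symmetric] qs using n0 n2 by (simp add: field_simps)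
  also have "\<dots> = (1 - Q ^ Suc a) * P / qpoch Q Q (Suc k)"
    by (subst split) (simp add: algebra_simps)
  finally show ?thesis unfolding gauss_binom_def P1 by simp
qed

lemma q_binomial_theorem:
  fixes Q :: "'a::field"
  assumes nz: "\<And>i. 1 \<le> i \<Longrightarrow> i \<le> N \<Longrightarrow> Q ^ i \<noteq> 1" and "a \<le> N"
  shows "(\<Prod>i<a. 1 + x * Q ^ i) = (\<Sum>k\<le>a. gauss_binom Q a k * Q ^ tri k * x ^ k)"
  using assms(2)
proof (induction a)
  case (Suc a)
  define t where "t a' k = gauss_binom Q a' k * Q ^ tri k * x ^ k" for a' k
  define S where "S = (\<Sum>k\<le>a. t a k)"
  have shift: "S = 1 + (\<Sum>k\<le>a. t a (Suc k))"
  proof -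
    have "S = S + t a (Suc a)" by (simp add: t_def gauss_binom_eq_0)
    also have "\<dots> = (\<Sum>k\<le>Suc a. t a k)" by (simp add: S_def)
    also have "\<dots> = 1 + (\<Sum>k\<le>a. t a (Suc k))" by (subst sum.atMost_Suc_shift) (simp add: t_def)
    finally show ?thesis .
  qed
  have pascal: "t (Suc a) (Suc k) = t a (Suc k) + x * Q ^ a * t a k" if "k \<le> a" for k
  proof -
    have "Q ^ (a - k) * Q ^ (tri k + k) = Q ^ a * Q ^ tri k"
      using that by (simp add: power_add[symmetric])
    then show ?thesis
      using gauss_binom_Suc_Suc[OF nz that] Suc.prems by (simp add: t_def algebra_simps)
  qed
  have "(\<Prod>i<Suc a. 1 + x * Q ^ i) = S + x * Q ^ a * S"
    using Suc by (simp add: S_def t_def algebra_simps)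
  also have "\<dots> = 1 + (\<Sum>k\<le>a. t a (Suc k)) + (\<Sum>k\<le>a. x * Q ^ a * t a k)"
    by (subst (1) shift) (simp add: S_def sum_distrib_left)
  also have "\<dots> = 1 + (\<Sum>k\<le>a. t (Suc a) (Suc k))"
    using pascal by (simp add: sum.distrib)
  also have "\<dots> = (\<Sum>k\<le>Suc a. t (Suc a) k)"
    by (subst sum.atMost_Suc_shift) (simp add: t_def)
  finally show ?case by (simp add: t_def)
qed simp

lemma qpoch_inverse_power:
  fixes Q u :: "'a::field"
  assumes u: "u * Q ^ a = 1" and "k \<le> a"
  shows "qpoch u Q k = (-u) ^ k * Q ^ tri k * (\<Prod>i<k. 1 - Q ^ (a - i))"
  using assms(2)
proof (induction k)
  case (Suc k)
  have "Q ^ k * Q ^ (a - k) = Q ^ a" using Suc.prems by (simp add: power_add[symmetric])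
  then have "(-u * Q ^ k) * (1 - Q ^ (a - k)) = 1 - u * Q ^ k"
    using u by (simp add: algebra_simps)
  then show ?case using Suc by (simp add: qpoch_Suc power_add algebra_simps)
qed simp

lemma terminating_q_binomial:
  fixes Q u :: "'a::field"
  assumes nz: "\<And>i. 1 \<le> i \<Longrightarrow> i \<le> N \<Longrightarrow> Q ^ i \<noteq> 1" and "a \<le> N" and u: "u * Q ^ a = 1"
  shows "(\<Sum>k\<le>a. qpoch u Q k / qpoch Q Q k * y ^ k) = (\<Prod>i<a. 1 - u * y * Q ^ i)"
proof -
  have "(\<Prod>i<a. 1 - u * y * Q ^ i) = (\<Prod>i<a. 1 + (- (u * y)) * Q ^ i)" by simp
  also have "\<dots> = (\<Sum>k\<le>a. gauss_binom Q a k * Q ^ tri k * (- (u * y)) ^ k)"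
    by (rule q_binomial_theorem[OF nz assms(2)])
  also have "\<dots> = (\<Sum>k\<le>a. qpoch u Q k / qpoch Q Q k * y ^ k)"
  proof (rule sum.cong)
    fix k assume "k \<in> {..a}"
    then show "gauss_binom Q a k * Q ^ tri k * (- (u * y)) ^ k = qpoch u Q k / qpoch Q Q k * y ^ k"
      using qpoch_inverse_power[OF u, of k]
      by (simp add: gauss_binom_def power_mult_distrib[symmetric])
  qed simp
  finally show ?thesis by simp
qed

text \<open>If u Q^a = 1 then the products (u Q^j;Q)_a vanish for 1 \<le> j \<le> a, so a linear
  combination of them over 0 \<le> j \<le> a reduces to its first term.\<close>
lemma sum_collapses_to_first:
  fixes Q u :: "'a::field"
  assumes u: "u * Q ^ a = 1"
  shows "(\<Sum>j\<le>a. c j * (\<Prod>i<a. 1 - u * Q ^ j * Q ^ i)) = c 0 * qpoch u Q a"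
proof -
  have "(\<Prod>i<a. 1 - u * Q ^ j * Q ^ i) = 0" if "j \<in> {..a} - {0}" for j
  proof (rule prod_zero)
    have "u * Q ^ j * Q ^ (a - j) = 1" using u that by (simp add: mult.assoc power_add[symmetric])
    then show "\<exists>i\<in>{..<a}. 1 - u * Q ^ j * Q ^ i = 0" using that by (intro bexI[of _ "a - j"]) auto
  qed simp
  then have "(\<Sum>j\<in>{..a} - {0}. c j * (\<Prod>i<a. 1 - u * Q ^ j * Q ^ i)) = 0"
    by (intro sum.neutral) simp
  moreover have "(\<Sum>j\<le>a. c j * (\<Prod>i<a. 1 - u * Q ^ j * Q ^ i))
      = c 0 * (\<Prod>i<a. 1 - u * Q ^ 0 * Q ^ i) + (\<Sum>j\<in>{..a} - {0}. c j * (\<Prod>i<a. 1 - u * Q ^ j * Q ^ i))"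
    by (rule sum.remove) auto
  ultimately show ?thesis by (simp add: qpoch_def)
qed

text \<open>Expansion of the second factor of the summand as a polynomial in Q^k: by swapping
  the roles of a and n, (Q^(a+1);Q)_n / (Q;Q)_n equals (Q^(n+1);Q)_a / (Q;Q)_a, which the
  q-binomial theorem expands in powers of Q^(n+1).\<close>
lemma qpoch_ratio_expansion:
  fixes Q :: "'a::field"
  assumes nz: "\<And>i. 1 \<le> i \<Longrightarrow> i \<le> N \<Longrightarrow> Q ^ i \<noteq> 1" and "a \<le> N" "k + s \<le> N"
  shows "qpoch (Q ^ Suc a) Q (k + s) / qpoch Q Q (k + s)
       = (\<Sum>j\<le>a. gauss_binom Q a j * Q ^ tri j * (- (Q ^ Suc s)) ^ j * (Q ^ j) ^ k) / qpoch Q Q a"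
proof -
  have "qpoch (Q ^ Suc a) Q (k + s) / qpoch Q Q (k + s) = qpoch (Q ^ Suc (k + s)) Q a / qpoch Q Q a"
    by (rule qpoch_ratio_swap[OF nz assms(2,3)])
  also have "qpoch (Q ^ Suc (k + s)) Q a = (\<Prod>i<a. 1 + (- (Q ^ Suc s * Q ^ k)) * Q ^ i)"
    by (simp add: qpoch_def power_add mult.commute mult.left_commute)
  also have "\<dots> = (\<Sum>j\<le>a. gauss_binom Q a j * Q ^ tri j * (- (Q ^ Suc s * Q ^ k)) ^ j)"
    by (rule q_binomial_theorem[OF nz assms(2)])
  also have "\<dots> = (\<Sum>j\<le>a. gauss_binom Q a j * Q ^ tri j * (- (Q ^ Suc s)) ^ j * (Q ^ j) ^ k)"
  proof (rule sum.cong)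
    fix j
    have "(- (Q ^ Suc s * Q ^ k)) ^ j = (- (Q ^ Suc s)) ^ j * (Q ^ k) ^ j"
      by (metis minus_mult_left power_mult_distrib)
    also have "(Q ^ k) ^ j = (Q ^ j) ^ k"
      by (simp add: power_mult[symmetric] mult.commute)
    finally show "gauss_binom Q a j * Q ^ tri j * (- (Q ^ Suc s * Q ^ k)) ^ j
             = gauss_binom Q a j * Q ^ tri j * (- (Q ^ Suc s)) ^ j * (Q ^ j) ^ k"
      by simp
  qed simp
  finally show ?thesis .
qed

text \<open>Expanding the second factor in powers of Q^k and exchanging the sums, the inner sums
  are terminating q-binomial sums, all of which vanish except the one for j = 0.\<close>
lemma terminating_summation:
  fixes Q u :: "'a::field"
  assumes nz: "\<And>i. 1 \<le> i \<Longrightarrow> i \<le> N \<Longrightarrow> Q ^ i \<noteq> 1" and "a + s \<le> N" and u: "u * Q ^ a = 1"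
  shows "(\<Sum>k\<le>a. qpoch u Q k * qpoch (Q ^ Suc a) Q (k + s) / (qpoch Q Q k * qpoch Q Q (k + s)))
         = (-u) ^ a * Q ^ tri a"
proof -
  have aN: "a \<le> N" using assms(2) by simp
  define D where "D = qpoch Q Q a"
  define E where "E j = gauss_binom Q a j * Q ^ tri j * (- (Q ^ Suc s)) ^ j" for j
  define A where "A k = qpoch u Q k / qpoch Q Q k" for k
  have "(\<Sum>k\<le>a. qpoch u Q k * qpoch (Q ^ Suc a) Q (k + s) / (qpoch Q Q k * qpoch Q Q (k + s)))
      = (\<Sum>k\<le>a. \<Sum>j\<le>a. E j * (A k * (Q ^ j) ^ k) / D)"
  proof (rule sum.cong[OF refl])
    fix k assume "k \<in> {..a}"
    then have ratio: "qpoch (Q ^ Suc a) Q (k + s) / qpoch Q Q (k + s) = (\<Sum>j\<le>a. E j * (Q ^ j) ^ k) / D"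
      using qpoch_ratio_expansion[OF nz aN, of k s] assms(2) by (simp add: E_def D_def)
    have "qpoch u Q k * qpoch (Q ^ Suc a) Q (k + s) / (qpoch Q Q k * qpoch Q Q (k + s))
        = A k * (qpoch (Q ^ Suc a) Q (k + s) / qpoch Q Q (k + s))"
      by (simp add: A_def times_divide_times_eq)
    also have "\<dots> = (\<Sum>j\<le>a. E j * (A k * (Q ^ j) ^ k) / D)"
      unfolding ratio by (simp add: sum_distrib_left sum_divide_distrib mult.left_commute)
    finally show "qpoch u Q k * qpoch (Q ^ Suc a) Q (k + s) / (qpoch Q Q k * qpoch Q Q (k + s))
             = (\<Sum>j\<le>a. E j * (A k * (Q ^ j) ^ k) / D)" .
  qed
  also have "\<dots> = (\<Sum>j\<le>a. E j * (\<Sum>k\<le>a. A k * (Q ^ j) ^ k)) / D"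
    by (subst sum.swap) (simp add: sum_distrib_left sum_divide_distrib)
  also have "\<dots> = (\<Sum>j\<le>a. E j * (\<Prod>i<a. 1 - u * Q ^ j * Q ^ i)) / D"
    by (simp only: A_def terminating_q_binomial[OF nz aN u])
  also have "\<dots> = E 0 * qpoch u Q a / D"
    by (simp only: sum_collapses_to_first[OF u])
  also have "\<dots> = (-u) ^ a * Q ^ tri a"
    using qpoch_inverse_power[OF u order_refl] qpoch_nonzero[OF nz aN]
    by (simp add: qpoch_reversed E_def D_def)
  finally show ?thesis .
qed

section \<open>Least nonnegative residues\<close>

text \<open>For p prime not dividing d, the congruence a d \<equiv> n (mod p) has exactly one solution
  with 0 \<le> a < p; this is what makes lnr well defined.\<close>
lemma residue_unique:
  fixes d n :: int
  assumes p: "prime p" and nd: "\<not> int p dvd d"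
  shows "\<exists>!a. a < p \<and> int p dvd (int a * d - n)"
proof -
  have pi: "prime (int p)" using p by simp
  have cop: "coprime (int p) d" using prime_imp_coprime[OF pi nd] .
  obtain u v where "u * d + v * int p = gcd d (int p)" using bezout_int by blast
  then have uv: "u * d + v * int p = 1" using cop by (simp add: gcd.commute coprime_iff_gcd_eq_1)
  have pp: "int p > 0" using p prime_gt_0_nat by simp
  define a where "a = nat ((n * u) mod int p)"
  have ia: "int a = (n * u) mod int p" unfolding a_def using pp by simp
  have alt: "a < p" using pp ia by (metis Euclidean_Rings.pos_mod_bound of_nat_less_iff)
  have "int p dvd ((n * u) mod int p - n * u)"
    using mod_eq_dvd_iff[of "(n * u) mod int p" "int p" "n * u"] by simp
  then have "int p dvd ((n * u) mod int p - n * u) * d - n * v * int p"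
    by (simp add: dvd_diff dvd_mult2)
  moreover have "((n * u) mod int p - n * u) * d - n * v * int p = int a * d - n * (u * d + v * int p)"
    by (simp add: ia algebra_simps)
  ultimately have ex: "a < p \<and> int p dvd (int a * d - n)" using alt uv by simp
  show ?thesis
  proof (rule ex1I[of _ a])
    fix b assume b: "b < p \<and> int p dvd (int b * d - n)"
    have "int p dvd (int b * d - n) - (int a * d - n)"
      by (rule dvd_diff[OF conjunct2[OF b] conjunct2[OF ex]])
    then have "int p dvd (int b - int a) * d" by (simp add: algebra_simps)
    then have "int p dvd (int b - int a)" using pi nd by (simp add: prime_dvd_mult_iff)
    then have "int b mod int p = int a mod int p" by (simp add: mod_eq_dvd_iff)
    then show "b = a" using b alt by simp
  qed (rule ex)
qed

lemma lnr_minus_frac: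
  assumes p: "prime p" and "0 < m" and pm: "\<not> p dvd m"
  shows "lnr p (- (of_nat t / of_nat m)) < p"
    and "p dvd lnr p (- (of_nat t / of_nat m)) * m + t"
proof -
  define x :: rat where "x = - (of_nat t / of_nat m)"
  obtain n d where q: "quotient_of x = (n, d)" by (cases "quotient_of x") auto
  have d0: "d > 0" using quotient_of_denom_pos[OF q] .
  have h1: "x * of_int d = of_int n" using quotient_of_div[OF q] d0 by simp
  have h2: "x * of_nat m = - of_nat t" using \<open>0 < m\<close> by (simp add: x_def)
  have "of_int n * of_nat m = (x * of_nat m) * (of_int d :: rat)" by (simp add: h1[symmetric] ac_simps)
  then have "of_int n * of_nat m = (- of_nat t) * (of_int d :: rat)" by (simp only: h2)
  then have "rat_of_int (n * int m) = rat_of_int (- (int t * d))" by simp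
  then have e: "n * int m = - (int t * d)" by (simp only: of_int_eq_iff)
  then have "d dvd n * int m" by simp
  then have "d dvd int m"
    using quotient_of_coprime[OF q] by (simp add: coprime_commute coprime_dvd_mult_right_iff)
  then have nd: "\<not> int p dvd d" using pm by (metis dvd_trans int_dvd_int_iff)
  define a where "a = lnr p x"
  have "a < p \<and> int p dvd (int a * d - n)"
    unfolding a_def lnr_def q using theI'[OF residue_unique[OF p nd, of n]] by simp
  then have alt: "a < p" and "int p dvd int a * d - n" by auto
  then have "int p dvd (int a * d - n) * int m" by simp
  also have "(int a * d - n) * int m = d * int (a * m + t)" using e by (simp add: algebra_simps)
  finally have "int p dvd int (a * m + t)" using nd p by (simp add: prime_dvd_mult_iff)
  then have "p dvd a * m + t" by (simp only: int_dvd_int_iff)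
  then show "lnr p (- (of_nat t / of_nat m)) < p" "p dvd lnr p (- (of_nat t / of_nat m)) * m + t"
    using alt by (simp_all add: a_def x_def)
qed

lemma lnr_complementary:
  assumes p: "prime p" and "0 < m" and pm: "\<not> p dvd m" and "r < m"
  shows "lnr p (- (of_nat r / of_nat m)) + lnr p (- (of_nat (m - r) / of_nat m)) + 1 = p"
proof -
  define a where "a = lnr p (- (of_nat r / of_nat m))"
  define b where "b = lnr p (- (of_nat (m - r) / of_nat m))"
  have ab: "a < p" "b < p" "p dvd a * m + r" "p dvd b * m + (m - r)"
    using lnr_minus_frac[OF assms(1-3)] by (auto simp: a_def b_def)
  have "(a * m + r) + (b * m + (m - r)) = (a + b + 1) * m" using \<open>r < m\<close> by (simp add: algebra_simps)
  then have "p dvd (a + b + 1) * m" using ab(3,4) by (metis dvd_add)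
  then have "p dvd a + b + 1" using p pm prime_dvd_mult_iff by blast
  then obtain k where k: "a + b + 1 = p * k" by (auto elim: dvdE)
  have "p * k < p * 2" using ab(1,2) k by linarith
  then have "k < 2" by simp
  moreover have "k \<noteq> 0" using k by (intro notI) simp
  ultimately have "k = 1" by simp
  then show ?thesis using k by (simp add: a_def b_def)
qed

section \<open>Evaluation of the sum at a nontrivial p-th root of unity\<close>

lemma power_eq_1_if_dvd:
  fixes z :: "'a::monoid_mult"
  assumes "z ^ p = 1" "p dvd n"
  shows "z ^ n = 1"
  using assms by (auto elim!: dvdE simp: power_mult)

lemma prime_root_of_unity_power_ne_1:
  fixes z :: "'a::monoid_mult"
  assumes p: "prime p" and z: "z ^ p = 1" "z \<noteq> 1" and i: "\<not> p dvd i"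
  shows "z ^ i \<noteq> 1"
proof
  assume zi: "z ^ i = 1"
  have "i \<noteq> 0" using i by (metis dvd_0_right)
  then obtain x y where xy: "i * x = p * y + gcd i p" using bezout_nat by blast
  have "gcd i p = 1"
    using prime_imp_coprime[OF p i] by (simp add: coprime_iff_gcd_eq_1 gcd.commute)
  then have "z ^ (i * x) = z" using xy z(1) by (simp add: power_add power_mult)
  moreover have "z ^ (i * x) = 1" using zi by (simp add: power_mult)
  ultimately show False using z(2) by simp
qed

lemma power_int_cong:
  fixes z :: "'a::field"
  assumes "z ^ p = 1" "z \<noteq> 0" "int p dvd i - j"
  shows "z powi i = z powi j"
proof -
  obtain k where "i - j = int p * k" using assms(3) by (auto elim: dvdE)
  then have "i = j + int p * k" by simp
  then have "z powi i = z powi j * (z powi int p) powi k"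
    using assms(2) by (simp add: power_int_add power_int_mult)
  then show ?thesis using assms(1) by simp
qed

lemma signed_power_value:
  fixes z :: "'a::field"
  assumes z: "z ^ (a * m + r) = 1" "z \<noteq> 0"
  shows "(- (z ^ r)) ^ a * (z ^ m) ^ tri a = (-1) ^ a * z powi (- (int m * int a * (int a + 1) div 2))"
proof -
  define F where "F = m * a * (a + 1) div 2"
  have F: "int m * int a * (int a + 1) div 2 = int F"
    unfolding F_def by (simp add: zdiv_int algebra_simps)
  have "2 * F = m * a * (a + 1)" unfolding F_def by simp
  moreover have "m * (2 * tri a + a) = m * (a * a)" using two_tri[of a] by simp
  ultimately have "2 * (r * a + m * tri a + F) = 2 * (a * (a * m + r))" by (simp add: algebra_simps)
  then have "r * a + m * tri a + F = a * (a * m + r)" by simp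
  then have "(z ^ r) ^ a * (z ^ m) ^ tri a * z ^ F = (z ^ (a * m + r)) ^ a"
    by (metis power_add power_mult mult.commute)
  then have "(z ^ r) ^ a * (z ^ m) ^ tri a = inverse (z ^ F)"
    using z by (simp add: field_simps)
  then show ?thesis unfolding F by (simp add: power_minus[of "z ^ r"] power_int_minus)
qed

text \<open>At a nontrivial p-th root of unity z the sum of the theorem takes the value
  (-1)^a z^(-m a (a+1)/2), where p | a m + r and a + s < p: with Q = z^m and u = z^r one has
  u Q^a = 1 and z^(m-r) = Q^(a+1), the summands with k > a vanish, and the remaining sum
  is the terminating summation.\<close>
lemma sum_value_at_root:
  fixes z :: complex
  assumes p: "prime p" and pm: "\<not> p dvd m" and z: "z ^ p = 1" "z \<noteq> 1"
    and as: "a + s \<le> p - 1" and da: "p dvd a * m + r" and rm: "r < m"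
  shows "rf_value z (\<Sum>k<p - s. (qpoch (qvar ^ r) (qvar ^ m) k * qpoch (qvar ^ (m - r)) (qvar ^ m) (k + s))
                     / (qpoch (qvar ^ m) (qvar ^ m) k * qpoch (qvar ^ m) (qvar ^ m) (k + s)))
             ((-1) ^ a * z powi (- (int m * int a * (int a + 1) div 2)))"
proof -
  define Q where "Q = z ^ m"
  define u where "u = z ^ r"
  define T where "T k = qpoch u Q k * qpoch (Q ^ Suc a) Q (k + s) / (qpoch Q Q k * qpoch Q Q (k + s))"
    for k
  have z0: "z \<noteq> 0" using z(1) prime_gt_0_nat[OF p] by (auto simp: power_0_left)
  have za: "z ^ (a * m + r) = 1" by (rule power_eq_1_if_dvd[OF z(1) da])
  have nz: "Q ^ i \<noteq> 1" if "1 \<le> i" "i \<le> p - 1" for i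
  proof -
    have "\<not> p dvd i" using that prime_gt_0_nat[OF p] by (auto dest: dvd_imp_le)
    then have "\<not> p dvd m * i" using p pm by (simp add: prime_dvd_mult_iff)
    then show ?thesis unfolding Q_def power_mult[symmetric] by (rule prime_root_of_unity_power_ne_1[OF p z])
  qed
  have u: "u * Q ^ a = 1"
    using za by (simp add: u_def Q_def power_mult[symmetric] power_add[symmetric] ac_simps)
  have mr: "z ^ (m - r) = Q ^ Suc a"
  proof -
    have "m * Suc a = (m - r) + (a * m + r)" using rm by (simp add: algebra_simps)
    then have "Q ^ Suc a = z ^ (m - r) * z ^ (a * m + r)" unfolding Q_def by (metis power_add power_mult)
    then show ?thesis using za by simp
  qed
  have "rf_value z (\<Sum>k<p - s. (qpoch (qvar ^ r) (qvar ^ m) k * qpoch (qvar ^ (m - r)) (qvar ^ m) (k + s))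
                     / (qpoch (qvar ^ m) (qvar ^ m) k * qpoch (qvar ^ m) (qvar ^ m) (k + s)))
             (\<Sum>k<p - s. T k)"
  proof (rule rf_value_sum)
    fix k assume "k \<in> {..<p - s}"
    then have "k \<le> p - 1" "k + s \<le> p - 1" by auto
    then have "qpoch Q Q k \<noteq> 0" "qpoch Q Q (k + s) \<noteq> 0"
      using qpoch_nonzero[OF nz] by blast+
    moreover have "rf_value z (qvar ^ r) u" "rf_value z (qvar ^ m) Q"
      unfolding u_def Q_def by (auto intro: rf_value_power rf_value_qvar)
    moreover have "rf_value z (qvar ^ (m - r)) (Q ^ Suc a)"
      unfolding mr[symmetric] by (rule rf_value_power[OF rf_value_qvar])
    ultimately show "rf_value z ((qpoch (qvar ^ r) (qvar ^ m) k * qpoch (qvar ^ (m - r)) (qvar ^ m) (k + s))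
                     / (qpoch (qvar ^ m) (qvar ^ m) k * qpoch (qvar ^ m) (qvar ^ m) (k + s))) (T k)"
      unfolding T_def by (intro rf_value_divide rf_value_mult rf_value_qpoch) simp_all
  qed
  moreover have "(\<Sum>k<p - s. T k) = (\<Sum>k\<le>a. T k)"
  proof (rule sum.mono_neutral_right)
    show "{..a} \<subseteq> {..<p - s}" using as prime_gt_0_nat[OF p] by auto
    show "\<forall>i\<in>{..<p - s} - {..a}. T i = 0"
      using u by (auto simp: T_def qpoch_def intro!: prod_zero bexI[of _ a])
  qed simp
  moreover have "(\<Sum>k\<le>a. T k) = (- u) ^ a * Q ^ tri a"
    unfolding T_def using as by (intro terminating_summation[OF nz _ u]) auto
  moreover have "(- u) ^ a * Q ^ tri a = (-1) ^ a * z powi (- (int m * int a * (int a + 1) div 2))"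
    unfolding u_def Q_def by (rule signed_power_value[OF za z0])
  ultimately show ?thesis by simp
qed

section \<open>The exponent in the case p \<equiv> \<plusminus>1 (mod m)\<close>

text \<open>If m divides p - 1 or p + 1 then 2m divides (p-1)(p+1), so the exponent
  r(m-r)(1-p^2)/(2m) is an integer.\<close>
lemma two_m_dvd_exponent:
  fixes p m r :: nat
  assumes "odd p" and "m dvd p - 1 \<or> m dvd p + 1"
  shows "2 * int m dvd int r * (int m - int r) * (1 - int p ^ 2)"
proof -
  obtain t where t: "int p = 2 * t + 1" using assms(1) by (metis oddE of_nat_Suc of_nat_mult of_nat_numeral Suc_eq_plus1 add.commute)
  have "2 * int m dvd (int p - 1) * (int p + 1)"
    using assms(2)
  proof
    assume "m dvd p - 1"
    then obtain c where "p - 1 = m * c" by (auto elim: dvdE)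
    then have "int p - 1 = int m * int c" using assms(1) by (metis odd_pos of_nat_diff of_nat_mult
        of_nat_1 Suc_leI One_nat_def)
    then have "(int p - 1) * (int p + 1) = 2 * int m * (int c * (t + 1))" using t by (simp add: algebra_simps)
    then show ?thesis by simp
  next
    assume "m dvd p + 1"
    then obtain c where "p + 1 = m * c" by (auto elim: dvdE)
    then have "int p + 1 = int m * int c" by (metis of_nat_add of_nat_mult of_nat_1)
    then have "(int p - 1) * (int p + 1) = 2 * int m * (int c * t)" using t by (simp add: algebra_simps)
    then show ?thesis by simp
  qed
  moreover have "1 - int p ^ 2 = - ((int p - 1) * (int p + 1))"
    by (simp add: algebra_simps power2_eq_square)
  ultimately show ?thesis by (simp add: dvd_mult)
qed

text \<open>Modulo p the two exponents agree: writing m a + r = p w, twice m times their sum is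
  divisible by p, and p is prime to 2m.\<close>
lemma exponent_congruence:
  fixes P M R A :: int
  assumes d: "P dvd M * A + R" and pr: "prime P" and pM: "\<not> P dvd M" and P2: "\<not> P dvd 2"
    and dX: "2 * M dvd R * (M - R) * (1 - P ^ 2)"
  shows "P dvd R * (M - R) * (1 - P ^ 2) div (2 * M) - (- (M * A * (A + 1) div 2))"
proof -
  define X where "X = R * (M - R) * (1 - P ^ 2)"
  define E where "E = X div (2 * M)"
  define F where "F = M * A * (A + 1) div 2"
  have XE: "X = 2 * M * E" unfolding E_def using dX X_def by simp
  have F2: "M * A * (A + 1) = 2 * F" unfolding F_def
    by (metis dvd_mult mult.assoc dvd_mult_div_cancel even_mult_iff odd_even_add odd_one)
  obtain w where "M * A + R = P * w" using d by (auto elim: dvdE)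
  then have MA: "M * A = P * w - R" by simp
  have "2 * M * (E + F) = X + M * (M * A * (A + 1))" using XE F2 by (simp add: algebra_simps)
  also have "M * (M * A * (A + 1)) = (M * A) * (M * A + M)" by (simp add: algebra_simps)
  also have "\<dots> = (P * w - R) * (P * w - R + M)" by (simp only: MA)
  also have "X + (P * w - R) * (P * w - R + M) = P * (- (R * (M - R) * P) + P * w * w - 2 * w * R + w * M)"
    unfolding X_def by (simp add: algebra_simps power2_eq_square)
  finally have "P dvd 2 * M * (E + F)" by simp
  then have "P dvd E + F" using pr pM P2 by (simp add: prime_dvd_mult_iff)
  then show ?thesis by (simp add: E_def F_def X_def)
qed

lemma special_exponent_at_root:
  fixes z :: "'a::field"
  assumes p: "prime p" "odd p" and pm: "\<not> p dvd m" and da: "p dvd a * m + r" and rm: "r < m"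
    and hm: "m dvd p - 1 \<or> m dvd p + 1" and z: "z ^ p = 1" "z \<noteq> 0"
  shows "z powi ((int r * int (m - r) * (1 - int p ^ 2)) div (2 * int m))
       = z powi (- (int m * int a * (int a + 1) div 2))"
proof (rule power_int_cong[OF z])
  have "\<not> int p dvd 2"
  proof
    assume "int p dvd 2"
    then have "p dvd 2" by (metis int_dvd_int_iff of_nat_numeral)
    then have "p \<le> 2" by (rule dvd_imp_le) simp
    then show False using prime_ge_2_nat[OF p(1)] p(2) by (simp add: le_antisym)
  qed
  moreover have "int p dvd int m * int a + int r"
    using da by (metis int_dvd_int_iff of_nat_add of_nat_mult mult.commute)
  ultimately show "int p dvd (int r * int (m - r) * (1 - int p ^ 2)) div (2 * int m)
                    - (- (int m * int a * (int a + 1) div 2))"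
    using exponent_congruence[of "int p" "int m" "int a" "int r"] two_m_dvd_exponent[OF p(2) hm, of r]
      p(1) pm rm by (simp add: of_nat_diff)
qed

theorem theorem2p7:
  fixes p m r s :: nat
  assumes "prime p" and "odd p" and "0 < r" and "0 < m" and "\<not> p dvd m" and "r < m"
    and "s \<le> lnr p (- (of_nat (m - r) / of_nat m))"
  shows "qcong
           (\<Sum>k<p - s. (qpoch (qvar ^ r) (qvar ^ m) k * qpoch (qvar ^ (m - r)) (qvar ^ m) (k + s))
                     / (qpoch (qvar ^ m) (qvar ^ m) k * qpoch (qvar ^ m) (qvar ^ m) (k + s)))
           ((-1) ^ lnr p (- (of_nat r / of_nat m)) *
              qvar powi (- (int m * int (lnr p (- (of_nat r / of_nat m)))
                              * (int (lnr p (- (of_nat r / of_nat m))) + 1) div 2)))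
           (qint p) 1
       \<and> (m dvd (p - 1) \<or> m dvd (p + 1) \<longrightarrow>
          qcong
           (\<Sum>k<p - s. (qpoch (qvar ^ r) (qvar ^ m) k * qpoch (qvar ^ (m - r)) (qvar ^ m) (k + s))
                     / (qpoch (qvar ^ m) (qvar ^ m) k * qpoch (qvar ^ m) (qvar ^ m) (k + s)))
           ((-1) ^ lnr p (- (of_nat r / of_nat m)) *
              qvar powi ((int r * int (m - r) * (1 - int p ^ 2)) div (2 * int m)))
           (qint p) 1)"
proof -
  define a where "a = lnr p (- (of_nat r / of_nat m))"
  define S where "S = (\<Sum>k<p - s. (qpoch (qvar ^ r) (qvar ^ m) k * qpoch (qvar ^ (m - r)) (qvar ^ m) (k + s))
                     / (qpoch (qvar ^ m) (qvar ^ m) k * qpoch (qvar ^ m) (qvar ^ m) (k + s)))"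
  have p0: "p > 0" using prime_gt_0_nat[OF assms(1)] .
  have da: "p dvd a * m + r" unfolding a_def by (rule lnr_minus_frac(2)[OF assms(1,4,5)])
  have "a + s \<le> p - 1" using lnr_complementary[OF assms(1,4,5,6)] assms(7) by (simp add: a_def)
  note root_value = sum_value_at_root[OF assms(1,5) _ _ this da assms(6), folded S_def]
  have "qcong S ((-1) ^ a * qvar powi (- (int m * int a * (int a + 1) div 2))) (qint p) 1"
    by (rule qcong_signed_power_of_q[OF p0 root_value])
  moreover have "qcong S ((-1) ^ a * qvar powi ((int r * int (m - r) * (1 - int p ^ 2)) div (2 * int m)))
                   (qint p) 1" if hm: "m dvd p - 1 \<or> m dvd p + 1"
  proof (rule qcong_signed_power_of_q[OF p0])
    fix z :: complex assume z: "z ^ p = 1" "z \<noteq> 1"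
    then have "z \<noteq> 0" using p0 by (auto simp: power_0_left)
    then show "rf_value z S ((-1) ^ a * z powi ((int r * int (m - r) * (1 - int p ^ 2)) div (2 * int m)))"
      using root_value[OF z] special_exponent_at_root[OF assms(1,2,5) da assms(6) hm z(1)] by simp
  qed
  ultimately show ?thesis unfolding S_def a_def by blast
qed

end
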